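(* Let $U$ be any $d\times d$ unitary matrix. For $k=1,\dots,d$ let $s_k=\max\{\|M\|: M \text{ a submatrix of } U \text{ with } \#\mathrm{cols}(M)+\#\mathrm{rows}(M)=k+1\}$, where $\|M\|$ is the largest singular value, let $R_k=\left(\frac{1+s_k}{2}\right)^2$, and define $W=(s_1,s_2-s_1,\dots,s_d-s_{d-1})$ and $Q=(R_1,R_2-R_1,\dots,R_d-R_{d-1})$. Then $W\prec Q$; consequently $H_\alpha(W)\ge H_\alpha(Q)$ for every Rényi entropy $H_\alpha$ (in particular for the Shannon entropy).
   Context: For vectors $x,y$ of the same length, $x\prec y$ means $\sum_{k=1}^n x^{\downarrow}_k\le\sum_{k=1}^n y^{\downarrow}_k$ for all $n$, with equality of total sums, where $x^{\downarrow}$ is $x$ sorted in decreasing order. The Rényi entropy of order $\alpha\neq1$ is $H_\alpha(x)=\frac{1}{1-\alpha}\ln\sum_i x_i^\alpha$, and $H_1$ is the Shannon entropy $-\sum_i x_i\ln x_i$. A submatrix is obtained by selecting a nonempty set of rows and a nonempty set of columns. *)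

theory Defs
  imports "HOL-Analysis.Analysis"
begin

text \<open>A d x d complex matrix is represented as a function U :: nat => nat => complex,
  with only the entries U i j for i, j < d being relevant.\<close>

definition unitary_mat :: "nat \<Rightarrow> (nat \<Rightarrow> nat \<Rightarrow> complex) \<Rightarrow> bool" where
  "unitary_mat d U \<longleftrightarrow>
     (\<forall>i<d. \<forall>j<d. (\<Sum>k<d. cnj (U k i) * U k j) = (if i = j then 1 else 0))"

text \<open>Largest singular value (= operator norm w.r.t. Euclidean norms) of the submatrix of U
  with row index set R and column index set C.\<close>

definition submat_norm :: "(nat \<Rightarrow> nat \<Rightarrow> complex) \<Rightarrow> nat set \<Rightarrow> nat set \<Rightarrow> real" where
  "submat_norm U R C =
     Sup {sqrt (\<Sum>i\<in>R. (cmod (\<Sum>j\<in>C. U i j * v j))\<^sup>2) | v.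
            (\<Sum>j\<in>C. (cmod (v j))\<^sup>2) \<le> 1}"

definition s_val :: "nat \<Rightarrow> (nat \<Rightarrow> nat \<Rightarrow> complex) \<Rightarrow> nat \<Rightarrow> real" where
  "s_val d U k = Max {submat_norm U R C | R C.
      R \<subseteq> {..<d} \<and> C \<subseteq> {..<d} \<and> R \<noteq> {} \<and> C \<noteq> {} \<and> card R + card C = k + 1}"

definition R_val :: "nat \<Rightarrow> (nat \<Rightarrow> nat \<Rightarrow> complex) \<Rightarrow> nat \<Rightarrow> real" where
  "R_val d U k = ((1 + s_val d U k) / 2)\<^sup>2"

definition incr_vec :: "nat \<Rightarrow> (nat \<Rightarrow> real) \<Rightarrow> real list" where
  "incr_vec d f = map (\<lambda>k. if k = 0 then f 1 else f (k + 1) - f k) [0..<d]"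

definition majorized :: "real list \<Rightarrow> real list \<Rightarrow> bool" where
  "majorized x y \<longleftrightarrow> length x = length y \<and>
     (\<forall>n. sum_list (take n (rev (sort x))) \<le> sum_list (take n (rev (sort y)))) \<and>
     sum_list x = sum_list y"

definition shannon :: "real list \<Rightarrow> real" where
  "shannon x = - sum_list (map (\<lambda>t. t * ln t) x)"

definition renyi :: "real \<Rightarrow> real list \<Rightarrow> real" where
  "renyi a x = (if a = 1 then shannon x
                else (1 / (1 - a)) * ln (sum_list (map (\<lambda>t. t powr a) x)))"

end

theory Submission
  imports Defs "HOL-Combinatorics.Permutations"
begin

text \<open>
  Unitarity gives \<open>0 \<le> s\<^sub>k \<le> 1\<close> and \<open>s\<^sub>d = 1\<close>
  (a full column), adding a row shows that \<open>s\<^sub>k\<close> is increasing, and the key estimate is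
  \<open>s\<^sub>k\<^sub>+\<^sub>1 \<le> s\<^sub>k + s\<^sub>1\<close>: from an optimal submatrix delete the column where the test vector
  is smallest, or the row where its image is smallest, whichever index set is larger; this
  costs at most the largest entry modulus \<open>s\<^sub>1\<close>. Hence every increment \<open>W\<^sub>k\<close> (\<open>k \<ge> 1\<close>)
  is at most \<open>W\<^sub>0 = s\<^sub>1\<close>, while \<open>Q\<^sub>k \<le> W\<^sub>k\<close> since \<open>t \<mapsto> ((1 + t) / 2)\<^sup>2\<close> is
  1-Lipschitz on \<open>[0, 1]\<close>, and both vectors sum to 1. So \<open>Q\<close> arises from \<open>W\<close> by moving
  mass from the other entries to the entry \<open>0\<close>, which is already a largest entry of \<open>W\<close>.
  This gives \<open>W \<prec> Q\<close> directly, and comparing chord slopes gives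
  \<open>\<Sum> f (W\<^sub>k) \<le> \<Sum> f (Q\<^sub>k)\<close> for every convex \<open>f\<close>, which yields the entropy inequalities.
\<close>

lemma unitary_mat_norm_preserving:
  assumes "unitary_mat d U"
  shows "(\<Sum>i<d. (cmod (\<Sum>j<d. U i j * w j))\<^sup>2) = (\<Sum>j<d. (cmod (w j))\<^sup>2)"
proof -
  have "complex_of_real (\<Sum>i<d. (cmod (\<Sum>j<d. U i j * w j))\<^sup>2)
      = (\<Sum>i<d. \<Sum>k<d. \<Sum>j<d. cnj (w j) * w k * (cnj (U i j) * U i k))"
    by (simp only: of_real_sum complex_norm_square cnj_sum complex_cnj_mult sum_product)
      (simp add: ac_simps)
  also have "\<dots> = (\<Sum>i<d. \<Sum>j<d. \<Sum>k<d. cnj (w j) * w k * (cnj (U i j) * U i k))"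
    by (rule sum.cong[OF refl], rule sum.swap)
  also have "\<dots> = (\<Sum>j<d. \<Sum>i<d. \<Sum>k<d. cnj (w j) * w k * (cnj (U i j) * U i k))"
    by (rule sum.swap)
  also have "\<dots> = (\<Sum>j<d. \<Sum>k<d. \<Sum>i<d. cnj (w j) * w k * (cnj (U i j) * U i k))"
    by (rule sum.cong[OF refl], rule sum.swap)
  also have "\<dots> = (\<Sum>j<d. \<Sum>k<d. cnj (w j) * w k * (\<Sum>i<d. cnj (U i j) * U i k))"
    by (simp only: sum_distrib_left)
  also have "\<dots> = (\<Sum>j<d. \<Sum>k<d. if j = k then cnj (w j) * w k else 0)"
    using assms unfolding unitary_mat_def by (intro sum.cong refl) auto
  also have "\<dots> = (\<Sum>j<d. w j * cnj (w j))"
    by (simp add: mult.commute)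
  also have "\<dots> = complex_of_real (\<Sum>j<d. (cmod (w j))\<^sup>2)"
    by (simp only: of_real_sum complex_norm_square)
  finally show ?thesis
    using of_real_eq_iff by blast
qed

definition submat_apply_norm ::
    "(nat \<Rightarrow> nat \<Rightarrow> complex) \<Rightarrow> nat set \<Rightarrow> nat set \<Rightarrow> (nat \<Rightarrow> complex) \<Rightarrow> real" where
  "submat_apply_norm U R C v = sqrt (\<Sum>i\<in>R. (cmod (\<Sum>j\<in>C. U i j * v j))\<^sup>2)"

lemma submat_norm_eq_Sup:
  "submat_norm U R C = Sup {submat_apply_norm U R C v | v. (\<Sum>j\<in>C. (cmod (v j))\<^sup>2) \<le> 1}"
  unfolding submat_norm_def submat_apply_norm_def by simp

lemma submat_apply_norm_nonneg: "0 \<le> submat_apply_norm U R C v"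
  unfolding submat_apply_norm_def by (simp add: sum_nonneg)

lemma submat_apply_norm_le_1:
  assumes U: "unitary_mat d U" and R: "R \<subseteq> {..<d}" and C: "C \<subseteq> {..<d}"
    and v: "(\<Sum>j\<in>C. (cmod (v j))\<^sup>2) \<le> 1"
  shows "submat_apply_norm U R C v \<le> 1"
proof -
  define w where "w j = (if j \<in> C then v j else 0)" for j
  have w_sum: "(\<Sum>j<d. g j * w j) = (\<Sum>j\<in>C. g j * v j)" for g :: "nat \<Rightarrow> complex"
    using C by (simp add: w_def if_distrib sum.If_cases Int_absorb1)
  have "(\<Sum>i\<in>R. (cmod (\<Sum>j\<in>C. U i j * v j))\<^sup>2) \<le> (\<Sum>i<d. (cmod (\<Sum>j<d. U i j * w j))\<^sup>2)"
    unfolding w_sum by (rule sum_mono2) (use R in auto)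
  also have "\<dots> = (\<Sum>j<d. (cmod (w j))\<^sup>2)"
    by (rule unitary_mat_norm_preserving[OF U])
  also have "\<dots> = (\<Sum>j\<in>C. (cmod (w j))\<^sup>2)"
    by (rule sum.mono_neutral_right) (use C in \<open>auto simp: w_def\<close>)
  also have "\<dots> = (\<Sum>j\<in>C. (cmod (v j))\<^sup>2)"
    by (simp add: w_def)
  finally show ?thesis
    unfolding submat_apply_norm_def using v by simp
qed

lemma submat_apply_norm_le_submat_norm:
  assumes "unitary_mat d U" "R \<subseteq> {..<d}" "C \<subseteq> {..<d}"
    and "(\<Sum>j\<in>C. (cmod (v j))\<^sup>2) \<le> 1"
  shows "submat_apply_norm U R C v \<le> submat_norm U R C"
  unfolding submat_norm_eq_Sup
  by (rule cSup_upper)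
    (use submat_apply_norm_le_1[OF assms(1-3)] assms(4) in \<open>auto intro!: bdd_aboveI[of _ 1]\<close>)

lemma submat_norm_le:
  assumes "\<And>v. (\<Sum>j\<in>C. (cmod (v j))\<^sup>2) \<le> 1 \<Longrightarrow> submat_apply_norm U R C v \<le> B"
  shows "submat_norm U R C \<le> B"
  unfolding submat_norm_eq_Sup
  by (rule cSup_least) (use assms in \<open>auto intro!: exI[of _ "\<lambda>_. 0"]\<close>)

lemma submat_norm_le_1:
  assumes "unitary_mat d U" "R \<subseteq> {..<d}" "C \<subseteq> {..<d}"
  shows "submat_norm U R C \<le> 1"
  by (rule submat_norm_le, rule submat_apply_norm_le_1[OF assms])

lemma submat_norm_nonneg:
  assumes "unitary_mat d U" "R \<subseteq> {..<d}" "C \<subseteq> {..<d}"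
  shows "0 \<le> submat_norm U R C"
proof -
  have "submat_apply_norm U R C (\<lambda>_. 0) \<le> submat_norm U R C"
    by (rule submat_apply_norm_le_submat_norm[OF assms]) simp
  then show ?thesis
    using submat_apply_norm_nonneg order_trans by blast
qed

lemma finite_submat_norms:
  "finite {submat_norm U R C | R C. R \<subseteq> {..<d} \<and> C \<subseteq> {..<d} \<and> P R C}"
proof (rule finite_subset)
  show "{submat_norm U R C | R C. R \<subseteq> {..<d} \<and> C \<subseteq> {..<d} \<and> P R C}
      \<subseteq> (\<lambda>(R, C). submat_norm U R C) ` (Pow {..<d} \<times> Pow {..<d})"
    by auto
qed simp

lemma submat_norm_le_s_val:
  assumes "R \<subseteq> {..<d}" "C \<subseteq> {..<d}" "R \<noteq> {}" "C \<noteq> {}" "card R + card C = k + 1"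
  shows "submat_norm U R C \<le> s_val d U k"
  unfolding s_val_def by (rule Max_ge[OF finite_submat_norms]) (use assms in blast)

lemma submat_apply_norm_le_s_val:
  assumes "unitary_mat d U" "R \<subseteq> {..<d}" "C \<subseteq> {..<d}" "0 < card R" "0 < card C"
    "card R + card C = k + 1" "(\<Sum>j\<in>C. (cmod (v j))\<^sup>2) \<le> 1"
  shows "submat_apply_norm U R C v \<le> s_val d U k"
proof -
  have "submat_norm U R C \<le> s_val d U k"
    using assms(2-6) by (intro submat_norm_le_s_val) auto
  then show ?thesis
    using submat_apply_norm_le_submat_norm[OF assms(1-3,7)] by linarith
qed

lemma s_val_attained:
  assumes "1 \<le> k" "k \<le> d"
  obtains R C where "R \<subseteq> {..<d}" "C \<subseteq> {..<d}" "R \<noteq> {}" "C \<noteq> {}"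
    "card R + card C = k + 1" "s_val d U k = submat_norm U R C"
proof -
  have "{0} \<subseteq> {..<d}" "{..<k} \<subseteq> {..<d}" "{..<k} \<noteq> {}" "card {0::nat} + card {..<k} = k + 1"
    using assms by (auto simp: lessThan_empty_iff)
  then have "s_val d U k \<in> {submat_norm U R C | R C. R \<subseteq> {..<d} \<and> C \<subseteq> {..<d} \<and>
      R \<noteq> {} \<and> C \<noteq> {} \<and> card R + card C = k + 1}"
    unfolding s_val_def by (intro Max_in finite_submat_norms) blast
  then show ?thesis
    using that by blast
qed

lemma s_val_nonneg:
  assumes "unitary_mat d U" "1 \<le> k" "k \<le> d"
  shows "0 \<le> s_val d U k"
  using s_val_attained[OF assms(2,3)] submat_norm_nonneg[OF assms(1)] by metis

lemma s_val_le_1: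
  assumes "unitary_mat d U" "1 \<le> k" "k \<le> d"
  shows "s_val d U k \<le> 1"
  using s_val_attained[OF assms(2,3)] submat_norm_le_1[OF assms(1)] by metis

lemma s_val_last:
  assumes U: "unitary_mat d U" and d: "1 \<le> d"
  shows "s_val d U d = 1"
proof -
  have "complex_of_real (\<Sum>i<d. (cmod (U i 0))\<^sup>2) = (\<Sum>i<d. cnj (U i 0) * U i 0)"
    by (simp only: of_real_sum complex_norm_square) (simp add: mult.commute)
  also have "\<dots> = 1"
    using U d unfolding unitary_mat_def by auto
  finally have column: "(\<Sum>i<d. (cmod (U i 0))\<^sup>2) = 1"
    by (metis of_real_eq_1_iff)
  have "1 = submat_apply_norm U {..<d} {0} (\<lambda>_. 1)"
    unfolding submat_apply_norm_def using column by simp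
  also have "\<dots> \<le> s_val d U d"
    by (rule submat_apply_norm_le_s_val[OF U]) (use d in \<open>auto simp: lessThan_empty_iff\<close>)
  finally show ?thesis
    using s_val_le_1[OF U d order_refl] by simp
qed

lemma norm_entry_le_s_val_1:
  assumes U: "unitary_mat d U" and "i < d" "j < d"
  shows "cmod (U i j) \<le> s_val d U 1"
proof -
  have "cmod (U i j) = submat_apply_norm U {i} {j} (\<lambda>_. 1)"
    unfolding submat_apply_norm_def by simp
  also have "\<dots> \<le> s_val d U 1"
    by (rule submat_apply_norm_le_s_val[OF U]) (use assms in auto)
  finally show ?thesis .
qed

lemma s_val_le_s_val_Suc:
  assumes U: "unitary_mat d U" and k: "1 \<le> k" "k < d"
  shows "s_val d U k \<le> s_val d U (Suc k)"
proof -
  obtain R C where RC: "R \<subseteq> {..<d}" "C \<subseteq> {..<d}" "R \<noteq> {}" "C \<noteq> {}" "card R + card C = k + 1"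
    and s: "s_val d U k = submat_norm U R C"
    using s_val_attained[of k d U] k by auto
  have "finite R" "finite C"
    using RC finite_subset by auto
  moreover have "0 < card C"
    using RC(4) \<open>finite C\<close> by (simp add: card_gt_0_iff)
  ultimately have "card R < card {..<d}"
    using RC k by simp
  then obtain i where i: "i < d" "i \<notin> R"
    using card_mono[OF \<open>finite R\<close>, of "{..<d}"] by (metis lessThan_iff not_le subsetI)
  have "submat_norm U R C \<le> submat_norm U (insert i R) C"
  proof (rule submat_norm_le)
    fix v assume v: "(\<Sum>j\<in>C. (cmod (v j))\<^sup>2) \<le> 1"
    have "submat_apply_norm U R C v \<le> submat_apply_norm U (insert i R) C v"
      unfolding submat_apply_norm_def
      by (intro real_sqrt_le_mono sum_mono2) (use \<open>finite R\<close> in auto)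
    also have "\<dots> \<le> submat_norm U (insert i R) C"
      by (rule submat_apply_norm_le_submat_norm[OF U]) (use RC i v in auto)
    finally show "submat_apply_norm U R C v \<le> submat_norm U (insert i R) C" .
  qed
  also have "\<dots> \<le> s_val d U (Suc k)"
    by (rule submat_norm_le_s_val) (use RC i \<open>finite R\<close> in auto)
  finally show ?thesis
    using s by simp
qed

text \<open>Delete the column at which the test vector is smallest in modulus: its coefficient has
  squared modulus at most \<open>1 / card C\<close>, and the column has \<open>card R \<le> card C\<close> entries.\<close>

lemma submat_apply_norm_remove_column:
  assumes C: "finite C" "C \<noteq> {}" and card: "card R \<le> card C"
    and entries: "\<And>i j. i \<in> R \<Longrightarrow> j \<in> C \<Longrightarrow> cmod (U i j) \<le> e" and e: "0 \<le> e"
    and v: "(\<Sum>j\<in>C. (cmod (v j))\<^sup>2) \<le> 1"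
  obtains l where "l \<in> C" "submat_apply_norm U R C v \<le> submat_apply_norm U R (C - {l}) v + e"
proof -
  define l where "l = arg_min_on (\<lambda>j. cmod (v j)) C"
  have l: "l \<in> C"
    unfolding l_def by (rule arg_min_if_finite(1)[OF C])
  have l_min: "cmod (v l) \<le> cmod (v j)" if "j \<in> C" for j
    unfolding l_def by (rule arg_min_least[OF C that])
  define a where "a i = (\<Sum>j\<in>C - {l}. U i j * v j)" for i
  define b where "b i = U i l * v l" for i
  have split: "(\<Sum>j\<in>C. U i j * v j) = a i + b i" for i
    unfolding a_def b_def using sum.remove[OF C(1) l, of "\<lambda>j. U i j * v j"] by (simp add: add.commute)
  have "real (card C) * (cmod (v l))\<^sup>2 \<le> (\<Sum>j\<in>C. (cmod (v j))\<^sup>2)"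
    by (rule sum_bounded_below) (use l_min in \<open>auto intro: power_mono\<close>)
  then have small_coeff: "real (card C) * (cmod (v l))\<^sup>2 \<le> 1"
    using v by linarith
  have "(\<Sum>i\<in>R. (cmod (b i))\<^sup>2) \<le> (\<Sum>i\<in>R. e\<^sup>2 * (cmod (v l))\<^sup>2)"
    unfolding b_def norm_mult power_mult_distrib
    by (intro sum_mono mult_right_mono power_mono) (use entries l in auto)
  also have "\<dots> = real (card R) * (cmod (v l))\<^sup>2 * e\<^sup>2"
    by simp
  also have "\<dots> \<le> real (card C) * (cmod (v l))\<^sup>2 * e\<^sup>2"
    using card by (intro mult_right_mono) auto
  also have "\<dots> \<le> e\<^sup>2"
    using small_coeff by (simp add: mult_left_le_one_le)
  finally have b_small: "L2_set (\<lambda>i. cmod (b i)) R \<le> e"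
    unfolding L2_set_def using e by (simp add: real_le_lsqrt)
  have "submat_apply_norm U R C v = L2_set (\<lambda>i. cmod (a i + b i)) R"
    unfolding submat_apply_norm_def L2_set_def split by simp
  also have "\<dots> \<le> L2_set (\<lambda>i. cmod (a i) + cmod (b i)) R"
    by (rule L2_set_mono) (auto simp: norm_triangle_ineq)
  also have "\<dots> \<le> L2_set (\<lambda>i. cmod (a i)) R + L2_set (\<lambda>i. cmod (b i)) R"
    by (rule L2_set_triangle_ineq)
  also have "L2_set (\<lambda>i. cmod (a i)) R = submat_apply_norm U R (C - {l}) v"
    unfolding submat_apply_norm_def L2_set_def a_def by simp
  finally show ?thesis
    using that l b_small by simp
qed

lemma sqrt_le_sqrt_diff_add:
  fixes a A r e :: real
  assumes "0 \<le> a" "a \<le> A" "0 < r" "r * a \<le> A" "A \<le> (r * e)\<^sup>2" "0 \<le> e"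
  shows "sqrt A \<le> sqrt (A - a) + e"
proof (cases "A = 0")
  case False
  define x y where "x = sqrt A" and "y = sqrt (A - a)"
  have x: "0 < x" "x\<^sup>2 = A" "x \<le> r * e"
    using assms False by (auto simp: x_def real_sqrt_le_iff real_le_lsqrt)
  have y: "0 \<le> y" "y\<^sup>2 = A - a" "y \<le> x"
    using assms by (auto simp: x_def y_def)
  have "r * a \<le> r * (x * e)"
    using assms(4) x mult_left_mono[OF x(3), of x] by (simp add: power2_eq_square ac_simps)
  then have a_le: "a \<le> x * e"
    using assms(3) by simp
  have "x * (x - y) \<le> (x + y) * (x - y)"
    using y by (intro mult_right_mono) auto
  also have "\<dots> = a"
    using x y by (simp add: algebra_simps power2_eq_square)
  also note a_le
  finally have "x - y \<le> e"
    using x by simp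
  then show ?thesis
    by (simp add: x_def y_def)
qed (use assms in simp)

text \<open>Delete the row where the image of the test vector is smallest: that row carries at most a
  \<open>1 / card R\<close> share of the squared norm, while the whole squared norm is at most
  \<open>card R * card C * e\<^sup>2\<close> by Cauchy--Schwarz.\<close>

lemma submat_apply_norm_remove_row:
  assumes R: "finite R" "R \<noteq> {}" and C: "finite C" and card: "card C \<le> card R"
    and entries: "\<And>i j. i \<in> R \<Longrightarrow> j \<in> C \<Longrightarrow> cmod (U i j) \<le> e" and e: "0 \<le> e"
    and v: "(\<Sum>j\<in>C. (cmod (v j))\<^sup>2) \<le> 1"
  obtains i0 where "i0 \<in> R" "submat_apply_norm U R C v \<le> submat_apply_norm U (R - {i0}) C v + e"
proof -
  define a where "a i = (cmod (\<Sum>j\<in>C. U i j * v j))\<^sup>2" for i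
  define i0 where "i0 = arg_min_on a R"
  have i0: "i0 \<in> R"
    unfolding i0_def by (rule arg_min_if_finite(1)[OF R])
  have i0_min: "a i0 \<le> a i" if "i \<in> R" for i
    unfolding i0_def by (rule arg_min_least[OF R that])
  define A where "A = (\<Sum>i\<in>R. a i)"
  define r where "r = real (card R)"
  have A_split: "A = a i0 + (\<Sum>i\<in>R - {i0}. a i)"
    unfolding A_def using sum.remove[OF R(1) i0] .
  have row_bound: "a i \<le> real (card C) * e\<^sup>2" if i: "i \<in> R" for i
  proof -
    have "cmod (\<Sum>j\<in>C. U i j * v j) \<le> (\<Sum>j\<in>C. cmod (U i j) * cmod (v j))"
      by (rule order_trans[OF norm_sum]) (simp add: norm_mult)
    then have "a i \<le> (\<Sum>j\<in>C. cmod (U i j) * cmod (v j))\<^sup>2"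
      unfolding a_def by (intro power_mono) auto
    also have "\<dots> \<le> (\<Sum>j\<in>C. (cmod (U i j))\<^sup>2) * (\<Sum>j\<in>C. (cmod (v j))\<^sup>2)"
      by (rule Cauchy_Schwarz_ineq_sum)
    also have "\<dots> \<le> (\<Sum>j\<in>C. e\<^sup>2) * 1"
      by (intro mult_mono sum_mono power_mono) (use entries i v e in \<open>auto simp: sum_nonneg\<close>)
    finally show ?thesis
      by simp
  qed
  have "A \<le> (\<Sum>i\<in>R. real (card C) * e\<^sup>2)"
    unfolding A_def by (rule sum_mono) (rule row_bound)
  also have "\<dots> = r * real (card C) * e\<^sup>2"
    unfolding r_def by simp
  also have "\<dots> \<le> r * r * e\<^sup>2"
    unfolding r_def using card by (intro mult_right_mono mult_left_mono) auto
  finally have "A \<le> (r * e)\<^sup>2"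
    by (simp add: power2_eq_square ac_simps)
  moreover have "r * a i0 \<le> A"
    unfolding r_def A_def by (rule sum_bounded_below) (rule i0_min)
  moreover have "a i0 \<le> A" "0 < r"
    using A_split R by (auto simp: a_def r_def card_gt_0_iff sum_nonneg)
  ultimately have "sqrt A \<le> sqrt (A - a i0) + e"
    using e by (intro sqrt_le_sqrt_diff_add) (auto simp: a_def)
  then show ?thesis
    using that i0 A_split unfolding submat_apply_norm_def A_def a_def by simp
qed

lemma s_val_Suc_le_add:
  assumes U: "unitary_mat d U" and k: "1 \<le> k" "k < d"
  shows "s_val d U (Suc k) \<le> s_val d U k + s_val d U 1"
proof -
  define e where "e = s_val d U 1"
  have e: "0 \<le> e"
    unfolding e_def using s_val_nonneg[OF U, of 1] k by simp
  obtain R C where RC: "R \<subseteq> {..<d}" "C \<subseteq> {..<d}" "R \<noteq> {}" "C \<noteq> {}"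
    "card R + card C = Suc k + 1" and s: "s_val d U (Suc k) = submat_norm U R C"
    using s_val_attained[of "Suc k" d U] k by auto
  have fin: "finite R" "finite C"
    using RC finite_subset by auto
  have card_pos: "0 < card R" "0 < card C"
    using fin RC(3,4) by (auto simp: card_gt_0_iff)
  have entries: "cmod (U i j) \<le> e" if "i \<in> R" "j \<in> C" for i j
    unfolding e_def by (rule norm_entry_le_s_val_1[OF U]) (use RC that in auto)
  have "submat_norm U R C \<le> s_val d U k + e"
  proof (rule submat_norm_le)
    fix v assume v: "(\<Sum>j\<in>C. (cmod (v j))\<^sup>2) \<le> 1"
    show "submat_apply_norm U R C v \<le> s_val d U k + e"
    proof (cases "card R \<le> card C")
      case True
      then obtain l where l: "l \<in> C"
        and drop: "submat_apply_norm U R C v \<le> submat_apply_norm U R (C - {l}) v + e"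
        using submat_apply_norm_remove_column[where R = R and U = U, OF fin(2) RC(4) _ entries e v]
        by blast
      have "(\<Sum>j\<in>C - {l}. (cmod (v j))\<^sup>2) \<le> 1"
        using v sum_mono2[OF fin(2), of "C - {l}" "\<lambda>j. (cmod (v j))\<^sup>2"] by auto
      then have "submat_apply_norm U R (C - {l}) v \<le> s_val d U k"
        using True RC k l fin card_pos by (intro submat_apply_norm_le_s_val[OF U]) (auto simp: card_Diff_singleton)
      then show ?thesis
        using drop by simp
    next
      case False
      then obtain i0 where i0: "i0 \<in> R"
        and "submat_apply_norm U R C v \<le> submat_apply_norm U (R - {i0}) C v + e"
        using submat_apply_norm_remove_row[where C = C and U = U, OF fin(1) RC(3) fin(2) _ entries e v]
        by auto
      moreover have "submat_apply_norm U (R - {i0}) C v \<le> s_val d U k"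
        using False RC k i0 fin card_pos v
        by (intro submat_apply_norm_le_s_val[OF U]) (auto simp: card_Diff_singleton)
      ultimately show ?thesis
        by simp
    qed
  qed
  then show ?thesis
    using s e_def by simp
qed

definition top_sum :: "nat \<Rightarrow> real list \<Rightarrow> real" where
  "top_sum m z = sum_list (take m (rev (sort z)))"

lemma rev_sort_nth_antimono:
  fixes z :: "'a::linorder list"
  assumes "i \<le> j" "j < length z"
  shows "rev (sort z) ! j \<le> rev (sort z) ! i"
  using assms by (simp add: rev_nth sorted_nth_mono)

lemma rev_sort_permutation:
  obtains p where "p permutes {..<length z}" "\<And>i. i < length z \<Longrightarrow> rev (sort z) ! i = z ! p i"
proof -
  have "mset (rev (sort z)) = mset z"
    by simp
  then obtain p where "p permutes {..<length z}" "permute_list p z = rev (sort z)"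
    by (rule mset_eq_permutation)
  then show ?thesis
    using that permute_list_nth by metis
qed

text \<open>Exchanging the elements of \<open>K\<close> outside the initial segment for the missing ones below it.\<close>

lemma sum_le_sum_initial_segment:
  fixes w :: "nat \<Rightarrow> real"
  assumes antimono: "\<And>i j. i \<le> j \<Longrightarrow> j < n \<Longrightarrow> w j \<le> w i" and K: "K \<subseteq> {..<n}"
  shows "(\<Sum>i\<in>K. w i) \<le> (\<Sum>i<card K. w i)"
proof -
  define m where "m = card K"
  have "finite K"
    using K finite_subset by blast
  have "m \<le> n"
    unfolding m_def using card_mono[OF _ K] by simp
  have "card (K - {..<m}) = card ({..<m} - K)"
    using \<open>finite K\<close> by (simp add: card_Diff_subset_Int Int_commute m_def)
  have "(\<Sum>i\<in>K - {..<m}. w i) \<le> real (card (K - {..<m})) * w (m - 1)"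
    by (rule sum_bounded_above) (use K antimono in auto)
  also have "\<dots> = real (card ({..<m} - K)) * w (m - 1)"
    using \<open>card (K - {..<m}) = card ({..<m} - K)\<close> by simp
  also have "\<dots> \<le> (\<Sum>i\<in>{..<m} - K. w i)"
    by (rule sum_bounded_below) (use antimono \<open>m \<le> n\<close> in auto)
  finally show ?thesis
    using sum.Int_Diff[OF \<open>finite K\<close>, of w "{..<m}"]
      sum.Int_Diff[OF finite_lessThan, of w m K] unfolding m_def
    by (simp add: Int_commute)
qed

lemma sum_nth_le_top_sum:
  assumes I: "I \<subseteq> {..<length z}"
  shows "(\<Sum>i\<in>I. z ! i) \<le> top_sum (card I) z"
proof -
  obtain p where p: "p permutes {..<length z}"
    and p_nth: "\<And>i. i < length z \<Longrightarrow> rev (sort z) ! i = z ! p i"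
    using rev_sort_permutation[of z] by blast
  define K where "K = {i \<in> {..<length z}. p i \<in> I}"
  have inj: "inj_on p K"
    using permutes_inj[OF p] inj_on_subset by blast
  have "p ` K = I"
    using permutes_image[OF p] permutes_in_image[OF p] I unfolding K_def by auto
  then have card_K: "card K = card I"
    using card_image[OF inj] by simp
  have "(\<Sum>i\<in>I. z ! i) = (\<Sum>i\<in>K. rev (sort z) ! i)"
    using sum.reindex[OF inj, of "\<lambda>i. z ! i"] \<open>p ` K = I\<close> p_nth unfolding K_def by simp
  also have "\<dots> \<le> (\<Sum>i<card K. rev (sort z) ! i)"
    by (rule sum_le_sum_initial_segment[where n = "length z"])
      (auto simp: K_def rev_sort_nth_antimono)
  also have "\<dots> = top_sum (card I) z"
    using card_mono[OF _ I] card_K by (simp add: top_sum_def sum_list_sum_nth atLeast0LessThan)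
  finally show ?thesis .
qed

lemma top_sum_attained:
  assumes "m \<le> length z"
  obtains I where "I \<subseteq> {..<length z}" "card I = m" "top_sum m z = (\<Sum>i\<in>I. z ! i)"
proof -
  obtain p where p: "p permutes {..<length z}"
    and p_nth: "\<And>i. i < length z \<Longrightarrow> rev (sort z) ! i = z ! p i"
    using rev_sort_permutation[of z] by blast
  have inj: "inj_on p {..<m}"
    using permutes_inj[OF p] inj_on_subset by blast
  have "top_sum m z = (\<Sum>i<m. z ! p i)"
    using assms p_nth by (simp add: top_sum_def sum_list_sum_nth atLeast0LessThan)
  also have "\<dots> = (\<Sum>i\<in>p ` {..<m}. z ! i)"
    using sum.reindex[OF inj, of "\<lambda>i. z ! i"] by simp
  finally have "top_sum m z = (\<Sum>i\<in>p ` {..<m}. z ! i)" .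
  moreover have "p ` {..<m} \<subseteq> {..<length z}"
    using permutes_image[OF p] assms by auto
  ultimately show ?thesis
    using card_image[OF inj] by (intro that[of "p ` {..<m}"]) simp_all
qed

lemma top_sum_all:
  assumes "length z \<le> m"
  shows "top_sum m z = sum_list z"
  using assms by (simp add: top_sum_def sum_list_rev flip: sum_mset_sum_list)

definition mass_moved_to_head :: "real list \<Rightarrow> real list \<Rightarrow> bool" where
  "mass_moved_to_head x y \<longleftrightarrow> length x = length y \<and> x \<noteq> [] \<and> sum_list x = sum_list y \<and>
     (\<forall>k \<in> {1..<length x}. y ! k \<le> x ! k \<and> x ! k \<le> x ! 0)"

lemma mass_moved_to_head_sum_le:
  assumes xy: "mass_moved_to_head x y" and J: "J \<subseteq> {..<length x}" "0 \<in> J"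
  shows "(\<Sum>i\<in>J. x ! i) \<le> (\<Sum>i\<in>J. y ! i)"
proof -
  let ?n = "length x"
  have "(\<Sum>i\<in>{..<?n} - J. y ! i) \<le> (\<Sum>i\<in>{..<?n} - J. x ! i)"
    using xy J(2) unfolding mass_moved_to_head_def
    by (intro sum_mono) (metis DiffE atLeastLessThan_iff lessThan_iff less_one not_le)
  moreover have "length y = ?n" "sum_list x = sum_list y"
    using xy by (simp_all add: mass_moved_to_head_def)
  then have "(\<Sum>i<?n. x ! i) = (\<Sum>i<?n. y ! i)"
    by (simp add: sum_list_sum_nth atLeast0LessThan)
  ultimately show ?thesis
    using sum.subset_diff[OF J(1) finite_lessThan, of "\<lambda>i. x ! i"]
      sum.subset_diff[OF J(1) finite_lessThan, of "\<lambda>i. y ! i"] by linarith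
qed

lemma sum_le_sum_exchange_max:
  fixes w :: "'a \<Rightarrow> real"
  assumes max: "\<And>k. k \<in> A \<Longrightarrow> w k \<le> w a" and "a \<in> A"
    and I: "I \<subseteq> A" "finite I" "I \<noteq> {}"
  obtains J where "J \<subseteq> A" "a \<in> J" "card J = card I" "(\<Sum>i\<in>I. w i) \<le> (\<Sum>i\<in>J. w i)"
proof (cases "a \<in> I")
  case True
  show ?thesis
    by (rule that[of I]) (use I True in auto)
next
  case False
  obtain k where k: "k \<in> I"
    using I(3) by blast
  define J where "J = insert a (I - {k})"
  show ?thesis
  proof (rule that[of J])
    show "J \<subseteq> A" "a \<in> J"
      using I \<open>a \<in> A\<close> by (auto simp: J_def)
    show "card J = card I"
      using I k False by (simp add: J_def card_Diff_singleton card_gt_0_iff)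
    have "(\<Sum>i\<in>J. w i) = w a + ((\<Sum>i\<in>I. w i) - w k)"
      using I k False by (simp add: J_def sum_diff1)
    then show "(\<Sum>i\<in>I. w i) \<le> (\<Sum>i\<in>J. w i)"
      using max[of k] I k by auto
  qed
qed

text \<open>The \<open>m\<close> largest entries of \<open>x\<close> may be taken to include the head, and on any such
  index set \<open>y\<close> has the larger sum.\<close>

lemma mass_moved_to_head_majorized:
  assumes xy: "mass_moved_to_head x y"
  shows "majorized x y"
proof -
  let ?n = "length x"
  have len: "length y = ?n" and "?n \<noteq> 0" and sums: "sum_list x = sum_list y"
    using xy unfolding mass_moved_to_head_def by auto
  have head_max: "x ! k \<le> x ! 0" if "k \<in> {..<?n}" for k
    using xy that unfolding mass_moved_to_head_def by (cases "k = 0") auto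
  have "top_sum m x \<le> top_sum m y" for m
  proof -
    consider "?n \<le> m" | "m = 0" | "0 < m" "m < ?n"
      by linarith
    then show ?thesis
    proof cases
      case 1
      then show ?thesis
        using len sums by (simp add: top_sum_all)
    next
      case 2
      then show ?thesis
        by (simp add: top_sum_def)
    next
      case 3
      then obtain I where I: "I \<subseteq> {..<?n}" "card I = m" and top_x: "top_sum m x = (\<Sum>i\<in>I. x ! i)"
        using top_sum_attained[of m x] by auto
      moreover have "finite I" "I \<noteq> {}"
        using I 3 finite_subset by auto
      ultimately obtain J where J: "J \<subseteq> {..<?n}" "0 \<in> J" "card J = m"
        and top_J: "top_sum m x \<le> (\<Sum>i\<in>J. x ! i)"
        using sum_le_sum_exchange_max[where w = "\<lambda>i. x ! i" and A = "{..<?n}" and a = 0 and I = I]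
          head_max \<open>?n \<noteq> 0\<close> by auto
      note top_J
      also have "\<dots> \<le> (\<Sum>i\<in>J. y ! i)"
        using mass_moved_to_head_sum_le[OF xy J(1,2)] .
      also have "\<dots> \<le> top_sum m y"
        using sum_nth_le_top_sum[of J y] J len by simp
      finally show ?thesis .
    qed
  qed
  then show ?thesis
    unfolding majorized_def top_sum_def using len sums by simp
qed

lemma convex_on_chord_le:
  fixes f :: "real \<Rightarrow> real"
  assumes f: "convex_on I f" and I: "a \<in> I" "d \<in> I" and order: "a \<le> b" "b \<le> c" "c < d"
  shows "f b - f a \<le> (f d - f c) / (d - c) * (b - a)"
proof (cases "a = b")
  case False
  then have "a < b"
    using order by simp
  have "(f a - f b) / (a - b) \<le> (f a - f d) / (a - d)"
    using convex_on_slope_le(1)[OF f I, of b] \<open>a < b\<close> order by simp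
  also have "\<dots> \<le> (f c - f d) / (c - d)"
    using convex_on_slope_le(2)[OF f I, of c] \<open>a < b\<close> order by simp
  finally have "(f b - f a) / (b - a) \<le> (f d - f c) / (d - c)"
    using minus_divide_divide[of "f b - f a" "b - a"] minus_divide_divide[of "f d - f c" "d - c"]
    by simp
  then show ?thesis
    using \<open>a < b\<close> by (simp add: divide_le_eq)
qed simp

lemma sum_list_map_head_tail:
  assumes "z \<noteq> []"
  shows "sum_list (map g z) = g (z ! 0) + (\<Sum>k\<in>{1..<length z}. g (z ! k))"
  using assms by (simp add: sum_list_sum_nth sum.atLeast_Suc_lessThan del: upt_Suc)

lemma mass_moved_to_head_tail_loss:
  assumes xy: "mass_moved_to_head x y"
  shows "(\<Sum>k\<in>{1..<length x}. x ! k - y ! k) = y ! 0 - x ! 0"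
proof -
  have "length y = length x" "x \<noteq> []" "y \<noteq> []" "sum_list x = sum_list y"
    using xy by (auto simp: mass_moved_to_head_def)
  then show ?thesis
    using sum_list_map_head_tail[of x id] sum_list_map_head_tail[of y id]
    by (simp add: sum_subtractf)
qed

lemma mass_moved_to_head_eq_if_head_eq:
  assumes xy: "mass_moved_to_head x y" and head: "y ! 0 = x ! 0"
  shows "x = y"
proof -
  have tail: "\<And>k. k \<in> {1..<length x} \<Longrightarrow> y ! k \<le> x ! k" and len: "length y = length x"
    using xy by (auto simp: mass_moved_to_head_def)
  have "\<forall>k\<in>{1..<length x}. x ! k - y ! k = 0"
    using mass_moved_to_head_tail_loss[OF xy] head
    by (subst sum_nonneg_eq_0_iff[symmetric]) (use tail in auto)
  then have "x ! k = y ! k" if "k < length x" for k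
    using that head by (cases "k = 0") auto
  then show "x = y"
    using len by (intro nth_equalityI) auto
qed

text \<open>Each tail entry loses \<open>x\<^sub>k - y\<^sub>k\<close> on a segment lying left of the segment
  \<open>[x\<^sub>0, y\<^sub>0]\<close> gained by the head, so convexity bounds the decrease of \<open>f\<close> by the
  increase.\<close>

lemma mass_moved_to_head_convex_sum_le:
  fixes f :: "real \<Rightarrow> real"
  assumes xy: "mass_moved_to_head x y" and f: "convex_on I f"
    and I: "set x \<subseteq> I" "set y \<subseteq> I"
  shows "sum_list (map f x) \<le> sum_list (map f y)"
proof (cases "y ! 0 = x ! 0")
  case True
  then show ?thesis
    using mass_moved_to_head_eq_if_head_eq[OF xy] by simp
next
  case False
  let ?S = "{1..<length x}" and ?m = "(f (y ! 0) - f (x ! 0)) / (y ! 0 - x ! 0)"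
  have len: "length y = length x" and "x \<noteq> []" "y \<noteq> []"
    and tail: "\<And>k. k \<in> ?S \<Longrightarrow> y ! k \<le> x ! k \<and> x ! k \<le> x ! 0"
    using xy by (auto simp: mass_moved_to_head_def)
  have "x ! 0 < y ! 0"
    using False mass_moved_to_head_tail_loss[OF xy] sum_nonneg[of ?S "\<lambda>k. x ! k - y ! k"] tail
    by fastforce
  have y_in: "y ! k \<in> I" if "k < length x" for k
    using I len that nth_mem[of k y] by auto
  have "(\<Sum>k\<in>?S. f (x ! k) - f (y ! k)) \<le> (\<Sum>k\<in>?S. ?m * (x ! k - y ! k))"
  proof (rule sum_mono)
    fix k assume "k \<in> ?S"
    then show "f (x ! k) - f (y ! k) \<le> ?m * (x ! k - y ! k)"
      using tail[of k] \<open>x ! 0 < y ! 0\<close> \<open>x \<noteq> []\<close>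
      by (intro convex_on_chord_le[OF f y_in y_in]) auto
  qed
  also have "\<dots> = ?m * (y ! 0 - x ! 0)"
    by (simp only: sum_distrib_left[symmetric] mass_moved_to_head_tail_loss[OF xy])
  also have "\<dots> = f (y ! 0) - f (x ! 0)"
    using False by simp
  finally show ?thesis
    using sum_list_map_head_tail[of x f] sum_list_map_head_tail[of y f] len \<open>x \<noteq> []\<close> \<open>y \<noteq> []\<close>
    by (simp add: sum_subtractf)
qed

lemma convex_on_nonneg_if_pos:
  fixes f :: "real \<Rightarrow> real"
  assumes convex: "convex_on {0<..} f" and zero: "f 0 = 0"
    and scale: "\<And>t y. 0 \<le> t \<Longrightarrow> t \<le> 1 \<Longrightarrow> 0 \<le> y \<Longrightarrow> f (t * y) \<le> t * f y"
  shows "convex_on {0..} f"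
proof (rule convex_onI)
  fix t x y :: real
  assume t: "0 < t" "t < 1" and xy: "x \<in> {0..}" "y \<in> {0..}"
  consider "x = 0" | "y = 0" | "0 < x" "0 < y"
    using xy by fastforce
  then show "f ((1 - t) *\<^sub>R x + t *\<^sub>R y) \<le> (1 - t) * f x + t * f y"
  proof cases
    case 1
    then show ?thesis
      using scale[of t y] t xy zero by simp
  next
    case 2
    then show ?thesis
      using scale[of "1 - t" x] t xy zero by simp
  next
    case 3
    then show ?thesis
      using convex_onD[OF convex, of t x y] t by simp
  qed
qed (simp add: convex_real_interval)

lemma convex_on_nonneg_powr:
  assumes "1 \<le> p"
  shows "convex_on {0..} (\<lambda>t::real. t powr p)"
proof (rule convex_on_nonneg_if_pos[OF powr_convex[OF assms]])
  fix t y :: real assume t: "0 \<le> t" "t \<le> 1" and "0 \<le> y"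
  have "t powr p \<le> t powr 1"
    by (rule powr_mono') (use assms t in auto)
  then show "(t * y) powr p \<le> t * y powr p"
    using t \<open>0 \<le> y\<close> by (simp add: powr_mult mult_right_mono)
qed simp

lemma convex_on_nonneg_neg_powr:
  assumes p: "0 < p" "p < 1"
  shows "convex_on {0..} (\<lambda>t::real. - (t powr p))"
proof (rule convex_on_nonneg_if_pos)
  have "concave_on {0<..} (\<lambda>t::real. t powr p)"
  proof (rule f''_le0_imp_concave[where f' = "\<lambda>x. p * x powr (p - 1)"
      and f'' = "\<lambda>x. p * ((p - 1) * x powr (p - 1 - 1))"])
    fix x :: real assume "x \<in> {0<..}"
    then show "((\<lambda>t. t powr p) has_real_derivative p * x powr (p - 1)) (at x)"
      and "((\<lambda>x. p * x powr (p - 1)) has_real_derivative p * ((p - 1) * x powr (p - 1 - 1))) (at x)"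
      by (auto intro!: derivative_eq_intros)
    show "p * ((p - 1) * x powr (p - 1 - 1)) \<le> 0"
      using p by (intro mult_nonneg_nonpos mult_nonpos_nonneg) auto
  qed simp
  then show "convex_on {0<..} (\<lambda>t::real. - (t powr p))"
    by (simp add: concave_on_def)
next
  fix t y :: real assume t: "0 \<le> t" "t \<le> 1" and "0 \<le> y"
  have "t powr 1 \<le> t powr p"
    by (rule powr_mono') (use p t in auto)
  then show "- ((t * y) powr p) \<le> t * - (y powr p)"
    using t \<open>0 \<le> y\<close> by (simp add: powr_mult mult_right_mono)
qed simp

lemma convex_on_nonneg_mult_ln: "convex_on {0..} (\<lambda>t::real. t * ln t)"
proof (rule convex_on_nonneg_if_pos)
  show "convex_on {0<..} (\<lambda>t::real. t * ln t)"
    by (rule f''_ge0_imp_convex[where f' = "\<lambda>x. ln x + 1" and f'' = "\<lambda>x. 1 / x"])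
      (auto intro!: derivative_eq_intros simp: field_simps)
next
  fix t y :: real assume t: "0 \<le> t" "t \<le> 1" and "0 \<le> y"
  show "t * y * ln (t * y) \<le> t * (y * ln y)"
  proof (cases "t = 0 \<or> y = 0")
    case False
    then have "t * y * ln t \<le> 0"
      using t \<open>0 \<le> y\<close> by (simp add: mult_nonneg_nonpos)
    then show ?thesis
      using False t \<open>0 \<le> y\<close> by (simp add: ln_mult algebra_simps)
  qed auto
qed simp

lemma sum_list_powr_pos:
  fixes z :: "real list"
  assumes "set z \<subseteq> {0..}" "0 < sum_list z"
  shows "0 < sum_list (map (\<lambda>t. t powr a) z)"
proof -
  obtain t where "t \<in> set z" "0 < t"
    using assms sum_list_nonpos[of z] by force
  then have "t powr a \<le> sum_list (map (\<lambda>t. t powr a) z)"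
    by (intro member_le_sum_list) auto
  moreover have "0 < t powr a"
    using \<open>0 < t\<close> by simp
  ultimately show ?thesis
    by linarith
qed

lemma renyi_le_if_convex_sums_le:
  assumes convex: "\<And>f. convex_on {0..} f \<Longrightarrow> sum_list (map f x) \<le> sum_list (map f y)"
    and nonneg: "set x \<subseteq> {0..}" "set y \<subseteq> {0..}" and pos: "0 < sum_list x" "0 < sum_list y"
    and "0 < a"
  shows "renyi a y \<le> renyi a x"
proof -
  have pos_powr: "0 < sum_list (map (\<lambda>t. t powr a) x)" "0 < sum_list (map (\<lambda>t. t powr a) y)"
    using sum_list_powr_pos nonneg pos by auto
  consider "a = 1" | "1 < a" | "a < 1"
    by linarith
  then show ?thesis
  proof cases
    case 1
    then show ?thesis
      using convex[OF convex_on_nonneg_mult_ln] by (simp add: renyi_def shannon_def)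
  next
    case 2
    then have "sum_list (map (\<lambda>t. t powr a) x) \<le> sum_list (map (\<lambda>t. t powr a) y)"
      by (intro convex convex_on_nonneg_powr) simp
    then show ?thesis
      using 2 pos_powr by (simp add: renyi_def divide_right_mono_neg)
  next
    case 3
    then have "sum_list (map (\<lambda>t. - (t powr a)) x) \<le> sum_list (map (\<lambda>t. - (t powr a)) y)"
      using \<open>0 < a\<close> by (intro convex convex_on_nonneg_neg_powr)
    then have "- sum_list (map (\<lambda>t. t powr a) x) \<le> - sum_list (map (\<lambda>t. t powr a) y)"
      by (simp add: uminus_sum_list_map o_def)
    then have "sum_list (map (\<lambda>t. t powr a) y) \<le> sum_list (map (\<lambda>t. t powr a) x)"
      by simp
    then show ?thesis
      using 3 pos_powr by (simp add: renyi_def divide_right_mono)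
  qed
qed

lemma length_incr_vec [simp]: "length (incr_vec d f) = d"
  by (simp add: incr_vec_def)

lemma nth_incr_vec:
  "k < d \<Longrightarrow> incr_vec d f ! k = (if k = 0 then f 1 else f (k + 1) - f k)"
  by (simp add: incr_vec_def)

lemma sum_list_incr_vec: "0 < d \<Longrightarrow> sum_list (incr_vec d f) = f d"
  by (induction d rule: nat_induct_non_zero) (simp_all add: incr_vec_def)

lemma incr_vec_nonneg:
  assumes "0 \<le> f 1" "\<And>k. 1 \<le> k \<Longrightarrow> k < d \<Longrightarrow> f k \<le> f (Suc k)"
  shows "set (incr_vec d f) \<subseteq> {0..}"
  using assms by (auto simp: in_set_conv_nth nth_incr_vec)

lemma incr_vec_mass_moved_to_head:
  fixes s :: "nat \<Rightarrow> real" and g :: "real \<Rightarrow> real"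
  assumes "0 < d"
    and range: "\<And>k. 1 \<le> k \<Longrightarrow> k \<le> d \<Longrightarrow> s k \<in> {0..1}"
    and mono: "\<And>k. 1 \<le> k \<Longrightarrow> k < d \<Longrightarrow> s k \<le> s (Suc k)"
    and step: "\<And>k. 1 \<le> k \<Longrightarrow> k < d \<Longrightarrow> s (Suc k) \<le> s k + s 1"
    and lipschitz: "\<And>a b. 0 \<le> a \<Longrightarrow> a \<le> b \<Longrightarrow> b \<le> 1 \<Longrightarrow> g b - g a \<le> b - a"
    and fixed: "g (s d) = s d"
  shows "mass_moved_to_head (incr_vec d s) (incr_vec d (\<lambda>k. g (s k)))"
  unfolding mass_moved_to_head_def
proof (intro conjI ballI)
  fix k assume "k \<in> {1..<length (incr_vec d s)}"
  then have k: "1 \<le> k" "k < d"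
    by auto
  have "g (s (k + 1)) - g (s k) \<le> s (k + 1) - s k"
    using k range[of k] range[of "k + 1"] mono[of k] by (intro lipschitz) auto
  then show "incr_vec d (\<lambda>k. g (s k)) ! k \<le> incr_vec d s ! k"
    using k by (simp add: nth_incr_vec)
  show "incr_vec d s ! k \<le> incr_vec d s ! 0"
    using k step[of k] \<open>0 < d\<close> by (simp add: nth_incr_vec)
qed (use assms in \<open>auto simp: sum_list_incr_vec simp flip: length_0_conv\<close>)

lemma square_mean_one_mono:
  fixes a b :: real
  assumes "0 \<le> a" "a \<le> b"
  shows "((1 + a) / 2)\<^sup>2 \<le> ((1 + b) / 2)\<^sup>2"
  using assms by (intro power_mono) auto

lemma square_mean_one_diff_le:
  fixes a b :: real
  assumes "0 \<le> a" "a \<le> b" "b \<le> 1"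
  shows "((1 + b) / 2)\<^sup>2 - ((1 + a) / 2)\<^sup>2 \<le> b - a"
proof -
  have "((1 + b) / 2)\<^sup>2 - ((1 + a) / 2)\<^sup>2 = (b - a) * ((2 + a + b) / 4)"
    by (simp add: power2_eq_square field_simps)
  also have "\<dots> \<le> b - a"
    by (rule mult_left_le) (use assms in auto)
  finally show ?thesis .
qed

lemma mass_moved_to_head_s_val_R_val:
  assumes U: "unitary_mat d U" and "0 < d"
  shows "mass_moved_to_head (incr_vec d (s_val d U)) (incr_vec d (R_val d U))"
  unfolding R_val_def[abs_def]
  using assms s_val_nonneg[OF U] s_val_le_1[OF U] s_val_le_s_val_Suc[OF U] s_val_Suc_le_add[OF U]
    s_val_last[OF U]
  by (intro incr_vec_mass_moved_to_head[where g = "\<lambda>t. ((1 + t) / 2)\<^sup>2"] square_mean_one_diff_le)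
    auto

lemma incr_vec_s_val_R_val_distributions:
  assumes U: "unitary_mat d U" and "0 < d"
  shows "set (incr_vec d (s_val d U)) \<subseteq> {0..}" "sum_list (incr_vec d (s_val d U)) = 1"
    and "set (incr_vec d (R_val d U)) \<subseteq> {0..}" "sum_list (incr_vec d (R_val d U)) = 1"
  unfolding R_val_def[abs_def]
proof -
  have s: "\<And>k. 1 \<le> k \<Longrightarrow> k \<le> d \<Longrightarrow> 0 \<le> s_val d U k"
    "\<And>k. 1 \<le> k \<Longrightarrow> k < d \<Longrightarrow> s_val d U k \<le> s_val d U (Suc k)"
    using s_val_nonneg[OF U] s_val_le_s_val_Suc[OF U] by auto
  show "set (incr_vec d (s_val d U)) \<subseteq> {0..}"
    by (rule incr_vec_nonneg) (use s \<open>0 < d\<close> in auto)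
  show "set (incr_vec d (\<lambda>k. ((1 + s_val d U k) / 2)\<^sup>2)) \<subseteq> {0..}"
    by (rule incr_vec_nonneg) (use s \<open>0 < d\<close> in \<open>auto intro: square_mean_one_mono\<close>)
  show "sum_list (incr_vec d (s_val d U)) = 1"
    "sum_list (incr_vec d (\<lambda>k. ((1 + s_val d U k) / 2)\<^sup>2)) = 1"
    using assms s_val_last[OF U] by (simp_all add: sum_list_incr_vec)
qed

theorem mainTheorem6:
  fixes d :: nat and U :: "nat \<Rightarrow> nat \<Rightarrow> complex"
  assumes "unitary_mat d U"
  shows "majorized (incr_vec d (s_val d U)) (incr_vec d (R_val d U))
    \<and> (\<forall>a::real. a > 0 \<longrightarrow>
          renyi a (incr_vec d (s_val d U)) \<ge> renyi a (incr_vec d (R_val d U)))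
    \<and> shannon (incr_vec d (s_val d U)) \<ge> shannon (incr_vec d (R_val d U))"
proof (cases "d = 0")
  case True
  then show ?thesis
    by (simp add: incr_vec_def majorized_def renyi_def shannon_def)
next
  case False
  then have "0 < d"
    by simp
  let ?W = "incr_vec d (s_val d U)" and ?Q = "incr_vec d (R_val d U)"
  have moved: "mass_moved_to_head ?W ?Q"
    by (rule mass_moved_to_head_s_val_R_val[OF assms \<open>0 < d\<close>])
  note distributions = incr_vec_s_val_R_val_distributions[OF assms \<open>0 < d\<close>]
  have convex: "sum_list (map f ?W) \<le> sum_list (map f ?Q)" if "convex_on {0..} f" for f
    using mass_moved_to_head_convex_sum_le[OF moved that] distributions by simp
  show ?thesis
    using mass_moved_to_head_majorized[OF moved] convex[OF convex_on_nonneg_mult_ln]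
      renyi_le_if_convex_sums_le[OF convex] distributions
    by (simp add: shannon_def)
qed

end
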